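(* Let $R_s>0$, $\lambda=2^{R_s}$, and let $\gamma_d,\gamma_e$ be independent, with $\gamma_t$ ($t\in\{d,e\}$) generalized-$K$ distributed with parameters $m_t>0,k_t>0$ and mean $\overline\gamma_t>0$, i.e. with CDF $F_{\gamma_t}(x)=\frac{1}{\Gamma(k_t)\Gamma(m_t)}G_{1,3}^{2,1}\!\left(\frac{k_tm_tx}{\overline\gamma_t}\,\middle|\,{1\atop k_t,m_t,0}\right)$. Let $\sigma_e^2$ be the variance of $\gamma_e$, $P(x)=F_{\gamma_d}(\lambda-1+\lambda x)$, and $\widetilde P_{\rm sop}(\overline\gamma_d):=P(\overline\gamma_e)+\frac{\sigma_e^2}{2}P''(\overline\gamma_e)$. Assume $k_d\neq m_d$ and put $v=\min\{k_d,m_d\}$. Then, with $\overline\gamma_e,\lambda,k_e,m_e,k_d,m_d$ fixed, as $\overline\gamma_d\to\infty$, $$\widetilde P_{\rm sop}(\overline\gamma_d)=\overline\gamma_d^{-v}\,\frac{\Gamma(|k_d-m_d|)(k_dm_d)^v(\lambda-1+\lambda\overline\gamma_e)^v}{\Gamma(k_d)\Gamma(m_d)}\left(\frac1v+\frac{\left(\frac{(k_e+1)(m_e+1)}{k_em_e}-1\right)(v-1)\overline\gamma_e^2\lambda^2}{2(\lambda-1+\lambda\overline\gamma_e)^2}\right)+o(\overline\gamma_d^{-v}).$$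
   Context: $G^{m,n}_{p,q}$ denotes the standard Meijer G-function and $\Gamma$ the Gamma function. The generalized-$K$ distribution with parameters $k,m$ and mean $\overline\gamma$ is that of $\overline\gamma XY$ with $X,Y$ independent unit-mean Gamma variables of shapes $k$ and $m$. $\widetilde P_{\rm sop}$ is the second-order Taylor approximation of the secrecy outage probability $\mathbb{E}\{F_{\gamma_d}(\lambda-1+\lambda\gamma_e)\}$ around the mean of $\gamma_e$. *)

theory Defs
  imports "HOL-Analysis.Analysis" "HOL-Library.Landau_Symbols"
begin

definition gamma_pdf :: "real \<Rightarrow> real \<Rightarrow> real" where
  "gamma_pdf k x = (if x > 0 then k powr k * x powr (k - 1) * exp (- k * x) / Gamma k else 0)"

text \<open>CDF of the generalized-K distribution with parameters k, m and mean g,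
  i.e. the CDF of g*X*Y with X ~ Gamma(k, unit mean), Y ~ Gamma(m, unit mean)
  independent (this equals the Meijer-G expression of the paper).\<close>
definition genK_cdf :: "real \<Rightarrow> real \<Rightarrow> real \<Rightarrow> real \<Rightarrow> real" where
  "genK_cdf k m g x =
     (LINT t|lborel. gamma_pdf m t *
        (LINT s|lborel. indicator {s. g * s * t \<le> x} s * gamma_pdf k s))"

definition genK_var :: "real \<Rightarrow> real \<Rightarrow> real \<Rightarrow> real" where
  "genK_var k m g =
     (LINT t|lborel. gamma_pdf m t *
        (LINT s|lborel. (g * s * t - g)\<^sup>2 * gamma_pdf k s))"

definition sop_approx ::
  "real \<Rightarrow> real \<Rightarrow> real \<Rightarrow> real \<Rightarrow> real \<Rightarrow> real \<Rightarrow> real \<Rightarrow> real" where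
  "sop_approx lam kd md ke me ge gd =
     (let P = (\<lambda>x. genK_cdf kd md gd (lam - 1 + lam * x))
      in P ge + genK_var ke me ge / 2 * deriv (deriv P) ge)"

end

theory Submission
  imports Defs
begin

(* With k = min kd md < m = max kd md (the generalized-K CDF is symmetric in its two shapes),
   write gamma_d = gd X Y with X, Y unit-mean Gamma variables of shapes k and m.  Conditioning
   on Y, F(x) = H(x / gd) with H(c) = E[G(c / Y)] for the Gamma(k) CDF G, and differentiating
   under the expectation gives H''(c) = E[G''(c / Y) / Y^2].  As u -> 0, G(u) / u^k tends to
   k^k / (k Gamma k) and u^2 G''(u) / u^k to (k - 1) k^k / Gamma k, both ratios being bounded
   on (0, oo); so by dominated convergence H(c) / c^k and H''(c) / c^(k-2) tend to these
   constants times E[Y^-k] = Gamma (m - k) m^k / Gamma m, which is finite precisely because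
   k < m.  Putting c = (lam - 1 + lam ge) / gd and inserting the generalized-K variance
   ge^2 ((ke + 1) (me + 1) / (ke me) - 1) gives the expansion. *)

section \<open>Real analysis\<close>

lemma powr_mult_exp_le:
  fixes p q u :: real
  assumes p: "p > 0" and q: "q > 0" and u: "u \<ge> 0"
  shows "u powr p * exp (- q * u) \<le> (p / q) powr p"
proof -
  have "(q / p) powr p * u powr p = (q * u / p) powr p"
    using p q u by (simp add: powr_mult powr_divide)
  also have "\<dots> \<le> exp (q * u / p) powr p"
  proof (rule powr_mono2)
    show "q * u / p \<le> exp (q * u / p)"
      using exp_ge_add_one_self[of "q * u / p"] by linarith
  qed (use p q u in auto)
  also have "\<dots> = exp (q * u)"
    using p by (simp add: exp_powr_real)
  finally show ?thesis
    using p q by (simp add: exp_minus powr_divide field_simps)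
qed

lemma powr_rescale:
  fixes c t x k :: real
  assumes c: "c > 0" and t: "t > 0"
  shows "x / t ^ j / c powr (k - j) = t powr (- k) * ((c / t) ^ j * x / (c / t) powr k)"
proof -
  have "c powr (k - j) = c powr k / c ^ j" "(c / t) powr k = c powr k / t powr k" "t powr (- k) = 1 / t powr k"
    using c t by (simp_all add: powr_diff powr_realpow powr_divide powr_minus_divide)
  then show ?thesis
    using c t by (simp add: power_divide)
qed

lemma filterlim_divide_at_right_0:
  fixes a :: real
  assumes "a > 0"
  shows "filterlim (\<lambda>x. x / a) (at_right 0) (at_right 0)"
  using assms unfolding filterlim_at
  by (auto intro!: tendsto_eq_intros eventually_at_right_less[THEN eventually_mono])

lemma filterlim_divide_at_top_at_right_0:
  fixes a :: real
  assumes "a > 0"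
  shows "filterlim (\<lambda>x. a / x) (at_right 0) at_top"
  using assms unfolding filterlim_at
  by (auto intro!: tendsto_divide_0 filterlim_at_top_imp_at_infinity filterlim_ident
      eventually_mono[OF eventually_gt_at_top[of 0]])

lemma smallo_powr_of_tendsto:
  fixes f :: "real \<Rightarrow> real"
  assumes "((\<lambda>x. f x * x powr v) \<longlongrightarrow> T) at_top"
  shows "(\<lambda>x. f x - x powr (- v) * T) \<in> o[at_top](\<lambda>x. x powr (- v))"
proof (rule smalloI_tendsto)
  have "eventually (\<lambda>x. f x * x powr v - T = (f x - x powr (- v) * T) / x powr (- v)) at_top"
    using eventually_gt_at_top[of 0]
    by eventually_elim (simp add: powr_minus field_simps)
  then show "((\<lambda>x. (f x - x powr (- v) * T) / x powr (- v)) \<longlongrightarrow> 0) at_top"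
    using tendsto_diff[OF assms tendsto_const[of T]] by (auto intro: Lim_transform_eventually)
  show "eventually (\<lambda>x. x powr (- v) \<noteq> 0) at_top"
    using eventually_gt_at_top[of 0] by eventually_elim simp
qed

lemma deriv_deriv_affine_comp:
  fixes f f' :: "real \<Rightarrow> real"
  assumes S: "open S" "\<alpha> + \<beta> * x \<in> S"
    and f: "\<And>y. y \<in> S \<Longrightarrow> (f has_real_derivative f' y) (at y)"
    and f': "(f' has_real_derivative f'') (at (\<alpha> + \<beta> * x))"
  shows "deriv (deriv (\<lambda>x. f (\<alpha> + \<beta> * x))) x = \<beta>\<^sup>2 * f''"
proof -
  have affine: "((\<lambda>y. \<alpha> + \<beta> * y) has_real_derivative \<beta>) (at y)" for y
    by (auto intro!: derivative_eq_intros)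
  have "open ((\<lambda>x. \<alpha> + \<beta> * x) -` S)"
    using S by (intro open_vimage continuous_intros)
  then have "eventually (\<lambda>y. \<alpha> + \<beta> * y \<in> S) (nhds x)"
    using S eventually_nhds_in_open by fastforce
  then have "eventually (\<lambda>y. deriv (\<lambda>x. f (\<alpha> + \<beta> * x)) y = f' (\<alpha> + \<beta> * y) * \<beta>) (nhds x)"
    by eventually_elim (rule DERIV_imp_deriv[OF DERIV_chain2[OF f affine]])
  moreover have "((\<lambda>y. f' (\<alpha> + \<beta> * y) * \<beta>) has_real_derivative f'' * \<beta> * \<beta>) (at x)"
    by (intro DERIV_cmult_right DERIV_chain2[OF f' affine])
  ultimately have "(deriv (\<lambda>x. f (\<alpha> + \<beta> * x)) has_real_derivative f'' * \<beta> * \<beta>) (at x)"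
    by (subst DERIV_cong_ev[OF refl _ refl])
  then show ?thesis
    by (simp add: DERIV_imp_deriv power2_eq_square)
qed

lemma integral_dominated_convergence_at_within:
  fixes s :: "real \<Rightarrow> real \<Rightarrow> real" and f w :: "real \<Rightarrow> real"
  assumes f: "f \<in> borel_measurable lborel" and w: "integrable lborel w"
    and lim: "\<And>t. ((\<lambda>y. s y t) \<longlongrightarrow> f t) (at x within S)"
    and bound: "eventually (\<lambda>y. s y \<in> borel_measurable lborel \<and> (\<forall>t. \<bar>s y t\<bar> \<le> w t)) (at x within S)"
  shows "((\<lambda>y. LINT t|lborel. s y t) \<longlongrightarrow> (LINT t|lborel. f t)) (at x within S)"
proof (subst tendsto_at_iff_sequentially, intro allI impI)
  fix X :: "nat \<Rightarrow> real"
  assume "\<forall>i. X i \<in> S - {x}" "X \<longlonglongrightarrow> x"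
  then have X: "filterlim X (at x within S) sequentially"
    by (auto simp: filterlim_at)
  from filterlim_iff[THEN iffD1, OF X, rule_format, OF bound] obtain N
    where N: "\<And>n. N \<le> n \<Longrightarrow> s (X n) \<in> borel_measurable lborel \<and> (\<forall>t. \<bar>s (X n) t\<bar> \<le> w t)"
    by (auto simp: eventually_sequentially)
  have "(\<lambda>n. LINT t|lborel. s (X (n + N)) t) \<longlonglongrightarrow> (LINT t|lborel. f t)"
  proof (rule integral_dominated_convergence[where w=w])
    show "AE t in lborel. (\<lambda>n. s (X (n + N)) t) \<longlonglongrightarrow> f t"
      using filterlim_compose[OF lim X] by (intro AE_I2 LIMSEQ_ignore_initial_segment)
  qed (use f w N in auto)
  then show "((\<lambda>y. LINT t|lborel. s y t) \<circ> X) \<longlonglongrightarrow> (LINT t|lborel. f t)"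
    unfolding comp_def by (rule LIMSEQ_offset)
qed

lemma has_real_derivative_integral:
  fixes F F' :: "real \<Rightarrow> real \<Rightarrow> real" and w :: "real \<Rightarrow> real"
  assumes r: "r > 0"
    and integrable: "\<And>y. y \<in> ball x r \<Longrightarrow> integrable lborel (F y)"
    and measurable: "F' x \<in> borel_measurable lborel"
    and deriv: "\<And>y t. y \<in> ball x r \<Longrightarrow> ((\<lambda>y. F y t) has_real_derivative F' y t) (at y)"
    and bound: "\<And>y t. y \<in> ball x r \<Longrightarrow> \<bar>F' y t\<bar> \<le> w t"
    and w: "integrable lborel w"
  shows "((\<lambda>y. LINT t|lborel. F y t) has_real_derivative (LINT t|lborel. F' x t)) (at x)"
  unfolding has_field_derivative_iff
proof -
  have x: "x \<in> ball x r" using r by simp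
  have near: "eventually (\<lambda>y. y \<in> ball x r \<and> y \<noteq> x) (at x)"
    using eventually_at_ball'[OF r, of x UNIV] by simp
  have quotient_bound: "\<bar>(F y t - F x t) / (y - x)\<bar> \<le> w t" if "y \<in> ball x r" "y \<noteq> x" for y t
  proof -
    have "norm (F y t - F x t) \<le> w t * norm (y - x)"
    proof (rule field_differentiable_bound[of "ball x r"])
      show "((\<lambda>y. F y t) has_field_derivative F' z t) (at z within ball x r)" if "z \<in> ball x r" for z
        using deriv[OF that] by (rule has_field_derivative_at_within)
      show "norm (F' z t) \<le> w t" if "z \<in> ball x r" for z
        using bound[OF that] by simp
    qed (use that x in auto)
    then show ?thesis
      using that by (simp add: abs_divide divide_le_eq)
  qed
  have quotient_measurable: "(\<lambda>t. (F y t - F x t) / (y - x)) \<in> borel_measurable lborel"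
    if "y \<in> ball x r" for y
    using integrable[OF that] integrable[OF x] by (intro borel_measurable_divide borel_measurable_diff) auto
  have lim: "((\<lambda>y. LINT t|lborel. (F y t - F x t) / (y - x)) \<longlongrightarrow> (LINT t|lborel. F' x t)) (at x)"
  proof (rule integral_dominated_convergence_at_within[OF measurable w])
    show "((\<lambda>y. (F y t - F x t) / (y - x)) \<longlongrightarrow> F' x t) (at x)" for t
      using deriv[OF x] by (simp add: has_field_derivative_iff)
    show "eventually (\<lambda>y. (\<lambda>t. (F y t - F x t) / (y - x)) \<in> borel_measurable lborel
        \<and> (\<forall>t. \<bar>(F y t - F x t) / (y - x)\<bar> \<le> w t)) (at x)"
      using near by eventually_elim (use quotient_bound quotient_measurable in blast)
  qed
  have eq: "eventually (\<lambda>y. (LINT t|lborel. (F y t - F x t) / (y - x))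
      = ((LINT t|lborel. F y t) - (LINT t|lborel. F x t)) / (y - x)) (at x)"
    using near
  proof eventually_elim
    case (elim y)
    then show ?case
      using integrable[of y] integrable[OF x] by simp
  qed
  show "((\<lambda>y. ((LINT t|lborel. F y t) - (LINT t|lborel. F x t)) / (y - x))
      \<longlongrightarrow> (LINT t|lborel. F' x t)) (at x)"
    using lim tendsto_cong[OF eq] by simp
qed

section \<open>Gamma densities and the generalized-K distribution\<close>

lemma gamma_pdf_pos: "t > 0 \<Longrightarrow> gamma_pdf k t = k powr k / Gamma k * t powr (k - 1) * exp (- k * t)"
  by (simp add: gamma_pdf_def)

lemma gamma_pdf_nonpos: "t \<le> 0 \<Longrightarrow> gamma_pdf k t = 0"
  by (simp add: gamma_pdf_def)

lemma gamma_pdf_nonneg: "k > 0 \<Longrightarrow> 0 \<le> gamma_pdf k t"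
  by (simp add: gamma_pdf_def Gamma_real_pos)

lemma borel_measurable_gamma_pdf [measurable]: "gamma_pdf k \<in> borel_measurable borel"
  unfolding gamma_pdf_def by measurable

lemma has_bochner_integral_powr_exp:
  fixes a b :: real
  assumes a: "a > 0" and b: "b > 0"
  shows "has_bochner_integral lborel (\<lambda>t. indicator {0..} t * t powr (a - 1) * exp (- b * t))
           (Gamma a / b powr a)"
proof -
  define f where "f t = indicator {0..} t * t powr (a - 1) * exp (- b * t)" for t :: real
  have "ennreal (Gamma a) = (\<integral>\<^sup>+t. ennreal (indicator {0..} t * t powr (a - 1) / exp t) \<partial>lborel)"
    using Gamma_conv_nn_integral_real[OF a] by simp
  also have "\<dots> = b * (\<integral>\<^sup>+x. ennreal (indicator {0..} (0 + b * x) * (0 + b * x) powr (a - 1) / exp (0 + b * x)) \<partial>lborel)"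
    using b by (subst nn_integral_real_affine[where c=b and t=0]) auto
  also have "\<dots> = b * (\<integral>\<^sup>+x. ennreal (b powr (a - 1)) * ennreal (f x) \<partial>lborel)"
  proof (intro arg_cong2[where f="(*)"] refl nn_integral_cong)
    fix x :: real
    have "indicator {0..} (0 + b * x) * (0 + b * x) powr (a - 1) / exp (0 + b * x) = b powr (a - 1) * f x"
      using b by (auto simp: f_def indicator_def powr_mult exp_minus field_simps zero_le_mult_iff)
    then show "ennreal (indicator {0..} (0 + b * x) * (0 + b * x) powr (a - 1) / exp (0 + b * x))
        = ennreal (b powr (a - 1)) * ennreal (f x)"
      by (metis ennreal_mult' powr_ge_zero)
  qed
  also have "\<dots> = ennreal (b * b powr (a - 1)) * (\<integral>\<^sup>+x. ennreal (f x) \<partial>lborel)"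
    using b by (subst nn_integral_cmult) (auto simp: f_def ennreal_mult mult.assoc)
  also have "b * b powr (a - 1) = b powr a"
    using b by (simp add: powr_diff)
  finally have "(\<integral>\<^sup>+x. ennreal (f x) \<partial>lborel) = ennreal (Gamma a) / ennreal (b powr a)"
    using b by (simp add: ennreal_mult_divide_eq mult.commute[of "ennreal (b powr a)"])
  also have "\<dots> = ennreal (Gamma a / b powr a)"
    using a b by (simp add: divide_ennreal Gamma_real_pos)
  finally show ?thesis
    unfolding f_def using a b
    by (intro has_bochner_integral_nn_integral) (auto simp: indicator_def Gamma_real_pos)
qed

lemma gamma_pdf_powr_moment:
  assumes k: "k > 0" and r: "k + r > 0"
  shows "has_bochner_integral lborel (\<lambda>t. t powr r * gamma_pdf k t) (Gamma (k + r) / (Gamma k * k powr r))"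
proof -
  have "has_bochner_integral lborel
          (\<lambda>t. k powr k / Gamma k * (indicator {0..} t * t powr (k + r - 1) * exp (- k * t)))
          (k powr k / Gamma k * (Gamma (k + r) / k powr (k + r)))"
    by (intro has_bochner_integral_mult_right has_bochner_integral_powr_exp r k)
  moreover have "k powr k / Gamma k * (indicator {0..} t * t powr (k + r - 1) * exp (- k * t))
      = t powr r * gamma_pdf k t" for t
  proof (cases "t > 0")
    case True
    have "t powr (k + r - 1) = t powr r * t powr (k - 1)"
      using powr_add[of t r "k - 1"] by (simp add: algebra_simps)
    then show ?thesis using True by (simp add: gamma_pdf_pos)
  next
    case False
    then show ?thesis by (cases "t = 0") (auto simp: gamma_pdf_nonpos)
  qed
  moreover have "k powr k / Gamma k * (Gamma (k + r) / k powr (k + r)) = Gamma (k + r) / (Gamma k * k powr r)"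
    using k by (simp add: powr_add Gamma_real_pos)
  ultimately show ?thesis by simp
qed

lemma gamma_pdf_power_moment:
  assumes k: "k > 0"
  shows "has_bochner_integral lborel (\<lambda>t. t ^ n * gamma_pdf k t) (pochhammer k n / k ^ n)"
proof -
  have "k \<notin> \<int>\<^sub>\<le>\<^sub>0" using k nonpos_Ints_nonpos by fastforce
  then have "pochhammer k n / k ^ n = Gamma (k + n) / (Gamma k * k powr n)"
    using k by (simp add: pochhammer_Gamma powr_realpow)
  moreover have "(\<lambda>t. t powr n * gamma_pdf k t) = (\<lambda>t. t ^ n * gamma_pdf k t)"
    by (rule ext) (auto simp: powr_realpow gamma_pdf_def)
  ultimately show ?thesis
    using gamma_pdf_powr_moment[OF k, of n] k by simp
qed

lemma has_bochner_integral_gamma_pdf: "k > 0 \<Longrightarrow> has_bochner_integral lborel (gamma_pdf k) 1"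
  using gamma_pdf_power_moment[of k 0] by simp

lemma integrable_gamma_pdf: "k > 0 \<Longrightarrow> integrable lborel (gamma_pdf k)"
  using has_bochner_integral_gamma_pdf by (auto simp: has_bochner_integral_iff)

lemma integrable_gamma_pdf_indicator:
  "k > 0 \<Longrightarrow> A \<in> sets borel \<Longrightarrow> integrable lborel (\<lambda>s. indicator A s * gamma_pdf k s)"
  using integrable_mult_indicator[OF _ integrable_gamma_pdf] by simp

lemma gamma_pdf_quadratic_moment:
  assumes k: "k > 0"
  shows "has_bochner_integral lborel (\<lambda>t. (a * t\<^sup>2 + b * t + c) * gamma_pdf k t) (a * ((k + 1) / k) + b + c)"
proof -
  have "pochhammer k 2 / k ^ 2 = (k + 1) / k"
    using k by (simp add: numeral_2_eq_2 pochhammer_Suc power2_eq_square field_simps)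
  then have "has_bochner_integral lborel (\<lambda>t. a * (t\<^sup>2 * gamma_pdf k t) + b * (t * gamma_pdf k t) + c * gamma_pdf k t)
      (a * ((k + 1) / k) + b * 1 + c * 1)"
    using gamma_pdf_power_moment[OF k, of 2] gamma_pdf_power_moment[OF k, of 1] has_bochner_integral_gamma_pdf[OF k] k
    by (intro has_bochner_integral_add has_bochner_integral_mult_right) auto
  moreover have "(\<lambda>t. a * (t\<^sup>2 * gamma_pdf k t) + b * (t * gamma_pdf k t) + c * gamma_pdf k t)
      = (\<lambda>t. (a * t\<^sup>2 + b * t + c) * gamma_pdf k t)"
    by (rule ext) (simp add: algebra_simps)
  ultimately show ?thesis
    by simp
qed

lemma genK_var_eq:
  assumes k: "k > 0" and m: "m > 0"
  shows "genK_var k m g = g\<^sup>2 * ((k + 1) * (m + 1) / (k * m) - 1)"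
proof -
  have inner: "(LINT s|lborel. (g * s * t - g)\<^sup>2 * gamma_pdf k s)
      = (g * t)\<^sup>2 * ((k + 1) / k) + - 2 * g\<^sup>2 * t + g\<^sup>2" for t
  proof -
    have integrand: "(\<lambda>s. (g * s * t - g)\<^sup>2 * gamma_pdf k s)
        = (\<lambda>s. ((g * t)\<^sup>2 * s\<^sup>2 + - 2 * g\<^sup>2 * t * s + g\<^sup>2) * gamma_pdf k s)"
      by (rule ext) (simp add: power2_eq_square algebra_simps)
    show ?thesis
      unfolding integrand by (rule has_bochner_integral_integral_eq[OF gamma_pdf_quadratic_moment[OF k]])
  qed
  have integrand: "(\<lambda>t. gamma_pdf m t * ((g * t)\<^sup>2 * ((k + 1) / k) + - 2 * g\<^sup>2 * t + g\<^sup>2))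
      = (\<lambda>t. (g\<^sup>2 * ((k + 1) / k) * t\<^sup>2 + - 2 * g\<^sup>2 * t + g\<^sup>2) * gamma_pdf m t)"
    by (rule ext) (simp add: power2_eq_square algebra_simps)
  have "genK_var k m g = g\<^sup>2 * ((k + 1) / k) * ((m + 1) / m) + - 2 * g\<^sup>2 + g\<^sup>2"
    unfolding genK_var_def inner integrand
    by (rule has_bochner_integral_integral_eq[OF gamma_pdf_quadratic_moment[OF m]])
  then show ?thesis
    using k m by (simp add: field_simps)
qed

lemma genK_cdf_nn_integral:
  assumes k: "k > 0" and m: "m > 0"
  shows "ennreal (genK_cdf k m g x) =
    (\<integral>\<^sup>+t. (\<integral>\<^sup>+s. ennreal (gamma_pdf m t * indicator {s. g * s * t \<le> x} s * gamma_pdf k s) \<partial>lborel) \<partial>lborel)"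
proof -
  define I where "I t = (LINT s|lborel. indicator {s. g * s * t \<le> x} s * gamma_pdf k s)" for t
  have int_I: "integrable lborel (\<lambda>s. indicator {s. g * s * t \<le> x} s * gamma_pdf k s)" for t
    using integrable_gamma_pdf_indicator[OF k] by simp
  have I_nonneg: "0 \<le> I t" for t
    unfolding I_def by (intro integral_nonneg_AE AE_I2) (simp add: gamma_pdf_nonneg k)
  have "I t \<le> (LINT s|lborel. gamma_pdf k s)" for t
    unfolding I_def by (intro integral_mono int_I integrable_gamma_pdf k) (simp add: gamma_pdf_nonneg k indicator_def)
  then have I_le_1: "I t \<le> 1" for t
    using has_bochner_integral_gamma_pdf[OF k] by (simp add: has_bochner_integral_iff)
  have [measurable]: "I \<in> borel_measurable lborel"
    unfolding I_def by measurable
  have "integrable lborel (\<lambda>t. gamma_pdf m t * I t)"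
    by (rule Bochner_Integration.integrable_bound[OF integrable_gamma_pdf[OF m]])
       (use I_nonneg I_le_1 gamma_pdf_nonneg[OF m] in \<open>auto simp: abs_mult mult_left_le\<close>)
  then have "ennreal (genK_cdf k m g x) = (\<integral>\<^sup>+t. ennreal (gamma_pdf m t * I t) \<partial>lborel)"
    unfolding genK_cdf_def I_def[symmetric]
    using I_nonneg gamma_pdf_nonneg[OF m] by (subst nn_integral_eq_integral) auto
  also have "\<dots> = (\<integral>\<^sup>+t. (\<integral>\<^sup>+s. ennreal (gamma_pdf m t) *
      ennreal (indicator {s. g * s * t \<le> x} s * gamma_pdf k s) \<partial>lborel) \<partial>lborel)"
  proof (intro nn_integral_cong)
    fix t
    have "ennreal (I t) = (\<integral>\<^sup>+s. ennreal (indicator {s. g * s * t \<le> x} s * gamma_pdf k s) \<partial>lborel)"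
      unfolding I_def using int_I by (subst nn_integral_eq_integral) (auto simp: gamma_pdf_nonneg k)
    then show "ennreal (gamma_pdf m t * I t) = (\<integral>\<^sup>+s. ennreal (gamma_pdf m t) *
        ennreal (indicator {s. g * s * t \<le> x} s * gamma_pdf k s) \<partial>lborel)"
      using I_nonneg gamma_pdf_nonneg[OF m] by (simp add: ennreal_mult nn_integral_cmult)
  qed
  also have "\<dots> = (\<integral>\<^sup>+t. (\<integral>\<^sup>+s. ennreal (gamma_pdf m t * indicator {s. g * s * t \<le> x} s * gamma_pdf k s) \<partial>lborel) \<partial>lborel)"
    by (intro nn_integral_cong) (simp add: ennreal_mult[symmetric] gamma_pdf_nonneg k m mult.assoc)
  finally show ?thesis .
qed

lemma genK_cdf_commute:
  assumes k: "k > 0" and m: "m > 0"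
  shows "genK_cdf k m g x = genK_cdf m k g x"
proof -
  have "ennreal (genK_cdf k m g x) = ennreal (genK_cdf m k g x)"
    unfolding genK_cdf_nn_integral[OF k m] genK_cdf_nn_integral[OF m k]
    by (subst lborel_pair.Fubini') (measurable, simp add: indicator_def mult_ac)
  moreover have "0 \<le> genK_cdf k m g x" "0 \<le> genK_cdf m k g x"
    unfolding genK_cdf_def using k m
    by (auto intro!: integral_nonneg_AE AE_I2 mult_nonneg_nonneg gamma_pdf_nonneg)
  ultimately show ?thesis by simp
qed

definition gamma_cdf :: "real \<Rightarrow> real \<Rightarrow> real" where
  "gamma_cdf k u = (LINT s|lborel. indicator {..u} s * gamma_pdf k s)"

lemma gamma_cdf_nonneg: "k > 0 \<Longrightarrow> 0 \<le> gamma_cdf k u"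
  unfolding gamma_cdf_def by (intro integral_nonneg_AE) (auto simp: gamma_pdf_nonneg)

lemma gamma_cdf_mono: "k > 0 \<Longrightarrow> u \<le> v \<Longrightarrow> gamma_cdf k u \<le> gamma_cdf k v"
  unfolding gamma_cdf_def
  by (intro integral_mono integrable_gamma_pdf_indicator) (auto simp: indicator_def gamma_pdf_nonneg)

lemma gamma_cdf_le_1:
  assumes k: "k > 0"
  shows "gamma_cdf k u \<le> 1"
proof -
  have "gamma_cdf k u \<le> (LINT s|lborel. gamma_pdf k s)"
    unfolding gamma_cdf_def using k
    by (intro integral_mono integrable_gamma_pdf_indicator integrable_gamma_pdf)
       (auto simp: indicator_def gamma_pdf_nonneg)
  then show ?thesis
    using has_bochner_integral_gamma_pdf[OF k] by (simp add: has_bochner_integral_iff)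
qed

lemma borel_measurable_gamma_cdf [measurable]: "k > 0 \<Longrightarrow> gamma_cdf k \<in> borel_measurable borel"
  by (rule borel_measurable_mono) (auto simp: mono_def gamma_cdf_mono)

lemma gamma_cdf_le_powr:
  assumes k: "k > 0" and u: "u \<ge> 0"
  shows "gamma_cdf k u \<le> k powr k / Gamma k / k * u powr k"
proof -
  have "integral\<^sup>N lborel (\<lambda>s. indicator {0..u} s * s powr (k - 1)) = u powr (k - 1 + 1) / (k - 1 + 1)"
    using has_integral_powr_from_0[of "k - 1" u] k u by (intro nn_integral_has_integral_lebesgue) auto
  then have powr_int: "has_bochner_integral lborel (\<lambda>s. indicator {0..u} s * s powr (k - 1)) (u powr k / k)"
    using k u by (intro has_bochner_integral_nn_integral) (auto simp: indicator_def)
  have "gamma_cdf k u \<le> (LINT s|lborel. k powr k / Gamma k * (indicator {0..u} s * s powr (k - 1)))"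
    unfolding gamma_cdf_def
  proof (intro integral_mono integrable_gamma_pdf_indicator k)
    show "integrable lborel (\<lambda>s. k powr k / Gamma k * (indicator {0..u} s * s powr (k - 1)))"
      using powr_int by (auto simp: has_bochner_integral_iff)
    show "indicator {..u} s * gamma_pdf k s \<le> k powr k / Gamma k * (indicator {0..u} s * s powr (k - 1))"
      for s
    proof (cases "s > 0")
      case True
      have "gamma_pdf k s \<le> k powr k / Gamma k * s powr (k - 1)"
        unfolding gamma_pdf_pos[OF True] using k True by (intro mult_left_le) (auto simp: Gamma_real_pos)
      then show ?thesis using True by (simp add: indicator_def)
    qed (simp add: gamma_pdf_nonpos indicator_def)
  qed simp
  also have "\<dots> = k powr k / Gamma k / k * u powr k"
    using powr_int by (simp add: has_bochner_integral_iff)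
  finally show ?thesis .
qed

lemma continuous_on_gamma_pdf:
  assumes "0 < a"
  shows "continuous_on {a..b} (gamma_pdf k)"
proof -
  have "continuous_on {a..b} (\<lambda>t. k powr k / Gamma k * t powr (k - 1) * exp (- k * t))"
    using assms by (intro continuous_intros) auto
  then show ?thesis
    by (rule continuous_on_cong[THEN iffD1, rotated 2]) (use assms in \<open>auto simp: gamma_pdf_pos\<close>)
qed

lemma gamma_cdf_has_real_derivative:
  assumes k: "k > 0" and u: "u > 0"
  shows "(gamma_cdf k has_real_derivative gamma_pdf k u) (at u)"
proof -
  define a where "a = u / 2"
  have a: "0 < a" "a < u" using u by (auto simp: a_def)
  define C where "C = (LINT s|lborel. indicator {..<a} s * gamma_pdf k s)"
  have split: "gamma_cdf k v = C + integral {a..v} (gamma_pdf k)" if "v \<ge> a" for v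
  proof -
    have "set_integrable lborel {a..v} (gamma_pdf k)"
      using continuous_on_gamma_pdf[OF a(1)] by (rule borel_integrable_atLeastAtMost')
    then have "integral {a..v} (gamma_pdf k) = (LINT s|lborel. indicator {a..v} s * gamma_pdf k s)"
      by (simp add: set_borel_integral_eq_integral(2)[symmetric] set_lebesgue_integral_def)
    moreover have "gamma_cdf k v = (LINT s|lborel. indicator {..<a} s * gamma_pdf k s + indicator {a..v} s * gamma_pdf k s)"
      unfolding gamma_cdf_def using that by (intro Bochner_Integration.integral_cong) (auto simp: indicator_def)
    ultimately show ?thesis
      unfolding C_def using k by (simp add: integrable_gamma_pdf_indicator)
  qed
  have "((\<lambda>v. integral {a..v} (gamma_pdf k)) has_real_derivative gamma_pdf k u) (at u within {a..2 * u})"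
    using a continuous_on_gamma_pdf by (intro integral_has_real_derivative) auto
  then have "((\<lambda>v. C + integral {a..v} (gamma_pdf k)) has_real_derivative gamma_pdf k u) (at u)"
    using a by (auto simp: at_within_Icc_at intro!: derivative_eq_intros)
  moreover have "eventually (\<lambda>v. gamma_cdf k v = C + integral {a..v} (gamma_pdf k)) (nhds u)"
    using eventually_nhds_in_open[of "{a<..}" u] a by (auto elim!: eventually_mono intro: split)
  ultimately show ?thesis
    by (subst DERIV_cong_ev[OF refl _ refl])
qed

definition gamma_pdf_deriv :: "real \<Rightarrow> real \<Rightarrow> real" where
  "gamma_pdf_deriv k u = k powr k / Gamma k * ((k - 1) * u powr (k - 2) - k * u powr (k - 1)) * exp (- k * u)"

lemma borel_measurable_gamma_pdf_deriv [measurable]: "gamma_pdf_deriv k \<in> borel_measurable borel"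
  unfolding gamma_pdf_deriv_def by measurable

lemma gamma_pdf_has_real_derivative:
  assumes u: "u > 0"
  shows "(gamma_pdf k has_real_derivative gamma_pdf_deriv k u) (at u)"
proof -
  define B where "B = k powr k / Gamma k"
  have "u powr (k - 1) = u * u powr (k - 2)"
    using u powr_add[of u "k - 2" 1] by simp
  then have "((\<lambda>u. B * u powr (k - 1) * exp (- k * u)) has_real_derivative gamma_pdf_deriv k u) (at u)"
    using u unfolding gamma_pdf_deriv_def B_def[symmetric]
    by (auto intro!: derivative_eq_intros simp: algebra_simps)
  then show ?thesis
    using eventually_nhds_in_open[of "{0<..}" u] u
    by (subst DERIV_cong_ev[OF refl _ refl]) (auto elim!: eventually_mono simp: gamma_pdf_pos B_def)
qed

lemma gamma_pdf_mult_self: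
  "u > 0 \<Longrightarrow> u * gamma_pdf k u = k powr k / Gamma k * (u powr k * exp (- k * u))"
  by (simp add: gamma_pdf_pos powr_mult_base)

lemma gamma_pdf_deriv_mult_square:
  assumes u: "u > 0"
  shows "u\<^sup>2 * gamma_pdf_deriv k u = k powr k / Gamma k * ((k - 1) - k * u) * (u powr k * exp (- k * u))"
proof -
  define B where "B = k powr k / Gamma k"
  have "u\<^sup>2 * u powr (k - 2) = u powr k"
    using u by (simp add: powr_diff)
  moreover have "u\<^sup>2 * u powr (k - 1) = u * u powr k"
    using u by (simp add: powr_diff power2_eq_square)
  ultimately have "u\<^sup>2 * ((k - 1) * u powr (k - 2) - k * u powr (k - 1)) = ((k - 1) - k * u) * u powr k"
    by (simp add: algebra_simps)
  moreover have "u\<^sup>2 * gamma_pdf_deriv k u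
      = B * (u\<^sup>2 * ((k - 1) * u powr (k - 2) - k * u powr (k - 1))) * exp (- k * u)"
    unfolding gamma_pdf_deriv_def B_def[symmetric] by (simp only: mult_ac)
  ultimately show ?thesis
    unfolding B_def[symmetric] by (simp only: mult_ac)
qed

lemma gamma_pdf_mult_self_bound:
  assumes k: "k > 0" and u: "u > 0"
  shows "\<bar>u * gamma_pdf k u\<bar> \<le> k powr k / Gamma k"
proof -
  have "u powr k * exp (- k * u) \<le> 1"
    using powr_mult_exp_le[of k k u] k u by simp
  then have "k powr k / Gamma k * (u powr k * exp (- k * u)) \<le> k powr k / Gamma k"
    by (rule mult_left_le) (use k in \<open>simp add: Gamma_real_pos\<close>)
  then show ?thesis
    unfolding gamma_pdf_mult_self[OF u] using k by (simp add: Gamma_real_pos)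
qed

lemma gamma_pdf_deriv_mult_square_bounds:
  assumes k: "k > 0" and u: "u > 0"
  shows "\<bar>u\<^sup>2 * gamma_pdf_deriv k u\<bar> \<le> k powr k / Gamma k * (\<bar>k - 1\<bar> + k * ((k + 1) / k) powr (k + 1))"
    and "\<bar>u\<^sup>2 * gamma_pdf_deriv k u\<bar> \<le> k powr k / Gamma k * (\<bar>k - 1\<bar> + 1) * u powr k"
proof -
  define B where "B = k powr k / Gamma k"
  have B: "B > 0" using k by (simp add: B_def Gamma_real_pos)
  have abs_eq: "\<bar>u\<^sup>2 * gamma_pdf_deriv k u\<bar> = B * \<bar>(k - 1) - k * u\<bar> * (u powr k * exp (- k * u))"
    unfolding gamma_pdf_deriv_mult_square[OF u] B_def[symmetric] using B by (simp add: abs_mult)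
  have triangle: "\<bar>(k - 1) - k * u\<bar> \<le> \<bar>k - 1\<bar> + k * u"
    using abs_triangle_ineq4[of "k - 1" "k * u"] k u by simp
  have "\<bar>(k - 1) - k * u\<bar> * (u powr k * exp (- k * u))
      \<le> \<bar>k - 1\<bar> * (u powr k * exp (- k * u)) + k * (u powr (k + 1) * exp (- k * u))"
    using mult_right_mono[OF triangle, of "u powr k * exp (- k * u)"] u
    by (simp add: powr_add algebra_simps)
  also have "\<dots> \<le> \<bar>k - 1\<bar> * 1 + k * ((k + 1) / k) powr (k + 1)"
    using powr_mult_exp_le[of k k u] powr_mult_exp_le[of "k + 1" k u] k u
    by (intro add_mono mult_left_mono) auto
  finally show "\<bar>u\<^sup>2 * gamma_pdf_deriv k u\<bar> \<le> B * (\<bar>k - 1\<bar> + k * ((k + 1) / k) powr (k + 1))"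
    unfolding abs_eq using B by (simp add: mult.assoc mult_left_mono)
  have "\<bar>(k - 1) - k * u\<bar> * exp (- k * u) \<le> \<bar>k - 1\<bar> * exp (- k * u) + k * (u * exp (- k * u))"
    using mult_right_mono[OF triangle, of "exp (- k * u)"] by (simp add: algebra_simps)
  also have "\<dots> \<le> \<bar>k - 1\<bar> * 1 + k * (1 / k)"
    using powr_mult_exp_le[of 1 k u] k u by (intro add_mono mult_left_mono) auto
  finally have "\<bar>(k - 1) - k * u\<bar> * exp (- k * u) \<le> \<bar>k - 1\<bar> + 1"
    using k by simp
  then show "\<bar>u\<^sup>2 * gamma_pdf_deriv k u\<bar> \<le> B * (\<bar>k - 1\<bar> + 1) * u powr k"
    unfolding abs_eq using B mult_right_mono[of _ _ "u powr k"]
    by (simp add: mult_left_mono mult.commute mult.left_commute)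
qed

lemma gamma_cdf_tendsto_powr:
  assumes k: "k > 0"
  shows "((\<lambda>u. gamma_cdf k u / u powr k) \<longlongrightarrow> k powr k / Gamma k / k) (at_right 0)"
proof -
  have powr_lim: "((\<lambda>u. u powr k) \<longlongrightarrow> 0) (at_right 0)"
    using k by (intro tendsto_zero_powrI[where b=k] tendsto_ident_at tendsto_const)
       (auto intro: eventually_at_right_less[THEN eventually_mono])
  have "(gamma_cdf k \<longlongrightarrow> 0) (at_right 0)"
  proof (rule tendsto_sandwich[where f="\<lambda>_. 0" and h="\<lambda>u. k powr k / Gamma k / k * u powr k"])
    show "eventually (\<lambda>u. 0 \<le> gamma_cdf k u) (at_right 0)"
      using k by (simp add: gamma_cdf_nonneg)
    show "eventually (\<lambda>u. gamma_cdf k u \<le> k powr k / Gamma k / k * u powr k) (at_right 0)"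
      using eventually_at_right_less[of 0] by eventually_elim (use k gamma_cdf_le_powr in auto)
    show "((\<lambda>u. k powr k / Gamma k / k * u powr k) \<longlongrightarrow> 0) (at_right 0)"
      by (rule tendsto_mult_right_zero[OF powr_lim])
  qed simp
  then show ?thesis
  proof (rule lhopital_right_0[OF _ powr_lim])
    show "eventually (\<lambda>u. u powr k \<noteq> 0) (at_right 0)"
      "eventually (\<lambda>u. k * u powr (k - 1) \<noteq> 0) (at_right 0)"
      "eventually (\<lambda>u. (gamma_cdf k has_real_derivative gamma_pdf k u) (at u)) (at_right 0)"
      "eventually (\<lambda>u. ((\<lambda>u. u powr k) has_real_derivative k * u powr (k - 1)) (at u)) (at_right 0)"
      using eventually_at_right_less[of 0]
      by (eventually_elim, use k in \<open>auto intro: gamma_cdf_has_real_derivative has_real_derivative_powr\<close>)+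
    have "eventually (\<lambda>u. k powr k / Gamma k / k * exp (- k * u) = gamma_pdf k u / (k * u powr (k - 1))) (at_right 0)"
      using eventually_at_right_less[of 0] by eventually_elim (use k in \<open>simp add: gamma_pdf_pos\<close>)
    moreover have "((\<lambda>u. k powr k / Gamma k / k * exp (- k * u)) \<longlongrightarrow> k powr k / Gamma k / k * exp (- k * 0)) (at_right 0)"
      by (intro tendsto_intros)
    ultimately show "((\<lambda>u. gamma_pdf k u / (k * u powr (k - 1))) \<longlongrightarrow> k powr k / Gamma k / k) (at_right 0)"
      using tendsto_cong by fastforce
  qed
qed

section \<open>Scale mixtures of a Gamma density\<close>

(* E[psi (c / Y) / Y^j] for Y ~ Gamma(m); the density vanishes for t <= 0, where c / t is junk. *)
definition gamma_scale_mix :: "real \<Rightarrow> nat \<Rightarrow> (real \<Rightarrow> real) \<Rightarrow> real \<Rightarrow> real" where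
  "gamma_scale_mix m j \<psi> c = (LINT t|lborel. gamma_pdf m t * \<psi> (c / t) / t ^ j)"

lemma gamma_scale_mix_integrand_bound:
  assumes m: "m > 0" and y: "y > 0" and bound: "\<And>u. u > 0 \<Longrightarrow> \<bar>u ^ j * \<psi> u\<bar> \<le> C"
  shows "\<bar>gamma_pdf m t * \<psi> (y / t) / t ^ j\<bar> \<le> gamma_pdf m t * (C / y ^ j)"
proof (cases "t > 0")
  case True
  have "\<psi> (y / t) / t ^ j = (y / t) ^ j * \<psi> (y / t) / y ^ j"
    using True y by (simp add: power_divide)
  then have "\<bar>\<psi> (y / t) / t ^ j\<bar> \<le> C / y ^ j"
    using bound[of "y / t"] True y by (simp add: abs_divide divide_right_mono)
  then have "gamma_pdf m t * \<bar>\<psi> (y / t) / t ^ j\<bar> \<le> gamma_pdf m t * (C / y ^ j)"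
    by (rule mult_left_mono) (rule gamma_pdf_nonneg[OF m])
  then show ?thesis
    using gamma_pdf_nonneg[OF m, of t] by (simp add: abs_mult)
qed (simp add: gamma_pdf_nonpos)

lemma integrable_gamma_scale_mix:
  assumes m: "m > 0" and y: "y > 0" and [measurable]: "\<psi> \<in> borel_measurable borel"
    and bound: "\<And>u. u > 0 \<Longrightarrow> \<bar>u ^ j * \<psi> u\<bar> \<le> C"
  shows "integrable lborel (\<lambda>t. gamma_pdf m t * \<psi> (y / t) / t ^ j)"
proof (rule Bochner_Integration.integrable_bound)
  show "integrable lborel (\<lambda>t. gamma_pdf m t * (C / y ^ j))"
    using integrable_gamma_pdf[OF m] by simp
  show "AE t in lborel. norm (gamma_pdf m t * \<psi> (y / t) / t ^ j) \<le> norm (gamma_pdf m t * (C / y ^ j))"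
    using order_trans[OF gamma_scale_mix_integrand_bound[OF m y bound] abs_ge_self] by (intro AE_I2) simp
qed measurable

lemma gamma_scale_mix_has_real_derivative:
  fixes \<psi> \<psi>' :: "real \<Rightarrow> real"
  assumes m: "m > 0" and c: "c > 0"
    and [measurable]: "\<psi> \<in> borel_measurable borel" "\<psi>' \<in> borel_measurable borel"
    and deriv: "\<And>u. u > 0 \<Longrightarrow> (\<psi> has_real_derivative \<psi>' u) (at u)"
    and bound: "\<And>u. u > 0 \<Longrightarrow> \<bar>u ^ j * \<psi> u\<bar> \<le> C"
    and bound': "\<And>u. u > 0 \<Longrightarrow> \<bar>u ^ Suc j * \<psi>' u\<bar> \<le> C'"
  shows "(gamma_scale_mix m j \<psi> has_real_derivative gamma_scale_mix m (Suc j) \<psi>' c) (at c)"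
  unfolding gamma_scale_mix_def
proof (rule has_real_derivative_integral[where r="c / 2" and w="\<lambda>t. gamma_pdf m t * (C' / (c / 2) ^ Suc j)"])
  have near: "y > c / 2" if "y \<in> ball c (c / 2)" for y
    using that unfolding mem_ball dist_real_def by arith
  show "0 < c / 2"
    using c by simp
  show "integrable lborel (\<lambda>t. gamma_pdf m t * \<psi> (y / t) / t ^ j)" if "y \<in> ball c (c / 2)" for y
    using near[OF that] c by (intro integrable_gamma_scale_mix[OF m _ _ bound]) auto
  show "(\<lambda>t. gamma_pdf m t * \<psi>' (c / t) / t ^ Suc j) \<in> borel_measurable lborel"
    by measurable
  show "((\<lambda>y. gamma_pdf m t * \<psi> (y / t) / t ^ j) has_real_derivative
      gamma_pdf m t * \<psi>' (y / t) / t ^ Suc j) (at y)" if "y \<in> ball c (c / 2)" for y t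
  proof (cases "t > 0")
    case True
    have "((\<lambda>y. \<psi> (y / t)) has_real_derivative \<psi>' (y / t) * (1 / t)) (at y)"
      using near[OF that] c True
      by (intro DERIV_chain2[OF deriv]) (auto intro!: derivative_eq_intros)
    then have "((\<lambda>y. gamma_pdf m t * \<psi> (y / t) / t ^ j) has_real_derivative
        gamma_pdf m t * (\<psi>' (y / t) * (1 / t)) / t ^ j) (at y)"
      by (intro DERIV_cdivide DERIV_cmult)
    then show ?thesis
      by (simp add: mult.commute)
  qed (simp add: gamma_pdf_nonpos)
  show "\<bar>gamma_pdf m t * \<psi>' (y / t) / t ^ Suc j\<bar> \<le> gamma_pdf m t * (C' / (c / 2) ^ Suc j)"
    if "y \<in> ball c (c / 2)" for y t
  proof -
    have "0 \<le> C'"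
      using bound'[of 1] by simp
    then have "C' / y ^ Suc j \<le> C' / (c / 2) ^ Suc j"
      using near[OF that] c by (intro divide_left_mono power_mono mult_pos_pos) auto
    then show ?thesis
      using near[OF that] c gamma_pdf_nonneg[OF m, of t]
      by (intro order_trans[OF gamma_scale_mix_integrand_bound[OF m _ bound'] mult_left_mono]) auto
  qed
  show "integrable lborel (\<lambda>t. gamma_pdf m t * (C' / (c / 2) ^ Suc j))"
    using integrable_gamma_pdf[OF m] by simp
qed

lemma has_bochner_integral_gamma_pdf_inverse_moment:
  assumes "0 < k" "k < m"
  shows "has_bochner_integral lborel (\<lambda>t. gamma_pdf m t * t powr (- k)) (Gamma (m - k) * m powr k / Gamma m)"
proof -
  have "has_bochner_integral lborel (\<lambda>t. t powr (- k) * gamma_pdf m t) (Gamma (m + - k) / (Gamma m * m powr (- k)))"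
    using assms by (intro gamma_pdf_powr_moment) auto
  moreover have "Gamma (m + - k) / (Gamma m * m powr (- k)) = Gamma (m - k) * m powr k / Gamma m"
    using assms by (simp add: powr_minus_divide)
  ultimately show ?thesis
    by (simp add: mult.commute)
qed

lemma gamma_inverse_moment_tendsto:
  fixes \<rho> :: "real \<Rightarrow> real"
  assumes k: "0 < k" "k < m" and [measurable]: "\<rho> \<in> borel_measurable borel"
    and bound: "\<And>u. u > 0 \<Longrightarrow> \<bar>\<rho> u\<bar> \<le> C" and lim: "(\<rho> \<longlongrightarrow> L) (at_right 0)"
  shows "((\<lambda>c. LINT t|lborel. gamma_pdf m t * t powr (- k) * \<rho> (c / t))
           \<longlongrightarrow> L * (Gamma (m - k) * m powr k / Gamma m)) (at_right 0)"
proof -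
  have m: "m > 0" using k by simp
  define w where "w t = gamma_pdf m t * t powr (- k)" for t
  have w: "has_bochner_integral lborel w (Gamma (m - k) * m powr k / Gamma m)"
    unfolding w_def by (rule has_bochner_integral_gamma_pdf_inverse_moment[OF k])
  have dominated: "\<bar>w t * \<rho> (c / t)\<bar> \<le> w t * C" if "c > 0" for c t
  proof (cases "t > 0")
    case True
    then show ?thesis
      using bound[of "c / t"] that gamma_pdf_nonneg[OF m, of t]
      by (simp add: w_def abs_mult mult_left_mono)
  qed (simp add: w_def gamma_pdf_nonpos)
  have "((\<lambda>c. LINT t|lborel. w t * \<rho> (c / t)) \<longlongrightarrow> (LINT t|lborel. w t * L)) (at_right 0)"
  proof (rule integral_dominated_convergence_at_within[where w="\<lambda>t. w t * C"])
    show "(\<lambda>t. w t * L) \<in> borel_measurable lborel"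
      unfolding w_def by measurable
    show "integrable lborel (\<lambda>t. w t * C)"
      using w by (simp add: has_bochner_integral_iff)
    show "((\<lambda>c. w t * \<rho> (c / t)) \<longlongrightarrow> w t * L) (at_right 0)" for t
    proof (cases "t > 0")
      case True
      then show ?thesis
        by (intro tendsto_mult_left filterlim_compose[OF lim filterlim_divide_at_right_0])
    qed (simp add: w_def gamma_pdf_nonpos)
    have measurable: "(\<lambda>t. w t * \<rho> (c / t)) \<in> borel_measurable lborel" for c
      unfolding w_def by measurable
    show "eventually (\<lambda>c. (\<lambda>t. w t * \<rho> (c / t)) \<in> borel_measurable lborel
        \<and> (\<forall>t. \<bar>w t * \<rho> (c / t)\<bar> \<le> w t * C)) (at_right 0)"
      using eventually_at_right_less[of 0] by eventually_elim (use measurable dominated in blast)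
  qed
  moreover have "(LINT t|lborel. w t * L) = L * (Gamma (m - k) * m powr k / Gamma m)"
    using w by (simp add: has_bochner_integral_iff)
  ultimately show ?thesis
    by (simp add: w_def)
qed

lemma gamma_scale_mix_tendsto:
  fixes \<psi> :: "real \<Rightarrow> real"
  assumes k: "0 < k" "k < m" and [measurable]: "\<psi> \<in> borel_measurable borel"
    and bound: "\<And>u. u > 0 \<Longrightarrow> \<bar>u ^ j * \<psi> u\<bar> \<le> C * u powr k"
    and lim: "((\<lambda>u. u ^ j * \<psi> u / u powr k) \<longlongrightarrow> L) (at_right 0)"
  shows "((\<lambda>c. gamma_scale_mix m j \<psi> c / c powr (k - j))
           \<longlongrightarrow> L * (Gamma (m - k) * m powr k / Gamma m)) (at_right 0)"
proof -
  define \<rho> where "\<rho> u = u ^ j * \<psi> u / u powr k" for u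
  have rescale: "(LINT t|lborel. gamma_pdf m t * t powr (- k) * \<rho> (c / t))
      = gamma_scale_mix m j \<psi> c / c powr (k - j)" if c: "c > 0" for c
    unfolding gamma_scale_mix_def integral_divide_zero[symmetric]
  proof (intro Bochner_Integration.integral_cong refl)
    fix t :: real
    show "gamma_pdf m t * t powr (- k) * \<rho> (c / t) = gamma_pdf m t * \<psi> (c / t) / t ^ j / c powr (k - j)"
    proof (cases "t > 0")
      case True
      then show ?thesis
        using powr_rescale[OF c True, of "gamma_pdf m t * \<psi> (c / t)" j k]
        by (simp add: \<rho>_def mult_ac)
    qed (simp add: gamma_pdf_nonpos)
  qed
  have "\<bar>\<rho> u\<bar> \<le> C" if "u > 0" for u
    using bound[OF that] that by (simp add: \<rho>_def abs_divide divide_le_eq)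
  then have "((\<lambda>c. LINT t|lborel. gamma_pdf m t * t powr (- k) * \<rho> (c / t))
      \<longlongrightarrow> L * (Gamma (m - k) * m powr k / Gamma m)) (at_right 0)"
    using lim unfolding \<rho>_def[abs_def] by (intro gamma_inverse_moment_tendsto[OF k]) auto
  then show ?thesis
    using eventually_at_right_less[of 0]
    by (rule Lim_transform_eventually[OF _ eventually_mono]) (rule rescale)
qed

section \<open>The Taylor-approximated secrecy outage probability\<close>

lemma genK_cdf_eq_gamma_scale_mix:
  assumes g: "g > 0"
  shows "genK_cdf k m g x = gamma_scale_mix m 0 (gamma_cdf k) (x / g)"
  unfolding genK_cdf_def gamma_scale_mix_def gamma_cdf_def
proof (intro Bochner_Integration.integral_cong refl)
  fix t :: real
  show "gamma_pdf m t * (LINT s|lborel. indicator {s. g * s * t \<le> x} s * gamma_pdf k s)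
      = gamma_pdf m t * (LINT s|lborel. indicator {..x / g / t} s * gamma_pdf k s) / t ^ 0"
  proof (cases "t > 0")
    case True
    then have "{s. g * s * t \<le> x} = {..x / g / t}"
      using g by (auto simp: field_simps)
    then show ?thesis by simp
  qed (simp add: gamma_pdf_nonpos)
qed

lemma sop_approx_commute:
  assumes "kd > 0" "md > 0"
  shows "sop_approx lam kd md ke me ge gd = sop_approx lam md kd ke me ge gd"
  unfolding sop_approx_def genK_cdf_commute[OF assms] ..

lemma gamma_scale_mix_cdf_has_real_derivative:
  assumes k: "k > 0" and m: "m > 0" and c: "c > 0"
  shows "(gamma_scale_mix m 0 (gamma_cdf k) has_real_derivative gamma_scale_mix m 1 (gamma_pdf k) c) (at c)"
proof -
  have "(gamma_scale_mix m 0 (gamma_cdf k) has_real_derivative gamma_scale_mix m (Suc 0) (gamma_pdf k) c) (at c)"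
    using borel_measurable_gamma_cdf[OF k] gamma_cdf_has_real_derivative[OF k]
      gamma_cdf_nonneg[OF k] gamma_cdf_le_1[OF k] gamma_pdf_mult_self_bound[OF k]
    by (intro gamma_scale_mix_has_real_derivative[OF m c, where C=1 and C'="k powr k / Gamma k"]) auto
  then show ?thesis by simp
qed

lemma gamma_scale_mix_pdf_has_real_derivative:
  assumes k: "k > 0" and m: "m > 0" and c: "c > 0"
  shows "(gamma_scale_mix m 1 (gamma_pdf k) has_real_derivative gamma_scale_mix m 2 (gamma_pdf_deriv k) c) (at c)"
proof -
  have "(gamma_scale_mix m (Suc 0) (gamma_pdf k) has_real_derivative
      gamma_scale_mix m (Suc (Suc 0)) (gamma_pdf_deriv k) c) (at c)"
    using gamma_pdf_has_real_derivative gamma_pdf_mult_self_bound[OF k]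
      gamma_pdf_deriv_mult_square_bounds(1)[OF k]
    by (intro gamma_scale_mix_has_real_derivative[OF m c, where C="k powr k / Gamma k"
          and C'="k powr k / Gamma k * (\<bar>k - 1\<bar> + k * ((k + 1) / k) powr (k + 1))"])
       (auto simp: power2_eq_square)
  then show ?thesis by (simp add: numeral_2_eq_2)
qed

lemma gamma_scale_mix_cdf_tendsto:
  assumes k: "0 < k" "k < m"
  shows "((\<lambda>c. gamma_scale_mix m 0 (gamma_cdf k) c / c powr k)
           \<longlongrightarrow> Gamma (m - k) * (k * m) powr k / (Gamma k * Gamma m) / k) (at_right 0)"
proof -
  have "((\<lambda>c. gamma_scale_mix m 0 (gamma_cdf k) c / c powr (k - real 0))
      \<longlongrightarrow> k powr k / Gamma k / k * (Gamma (m - k) * m powr k / Gamma m)) (at_right 0)"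
    using borel_measurable_gamma_cdf[OF k(1)] gamma_cdf_tendsto_powr[OF k(1)]
      gamma_cdf_le_powr[OF k(1)] gamma_cdf_nonneg[OF k(1)]
    by (intro gamma_scale_mix_tendsto[OF k, where C="k powr k / Gamma k / k"]) auto
  then show ?thesis
    using k by (simp add: powr_mult mult_ac)
qed

lemma gamma_scale_mix_pdf_deriv_tendsto:
  assumes k: "0 < k" "k < m"
  shows "((\<lambda>c. gamma_scale_mix m 2 (gamma_pdf_deriv k) c / c powr (k - 2))
           \<longlongrightarrow> Gamma (m - k) * (k * m) powr k / (Gamma k * Gamma m) * (k - 1)) (at_right 0)"
proof -
  have "((\<lambda>u. k powr k / Gamma k * ((k - 1) - k * u) * exp (- k * u))
      \<longlongrightarrow> k powr k / Gamma k * ((k - 1) - k * 0) * exp (- k * 0)) (at_right 0)"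
    by (intro tendsto_intros)
  moreover have "eventually (\<lambda>u. k powr k / Gamma k * ((k - 1) - k * u) * exp (- k * u)
      = u ^ 2 * gamma_pdf_deriv k u / u powr k) (at_right 0)"
    using eventually_at_right_less[of 0]
    by eventually_elim (simp add: gamma_pdf_deriv_mult_square)
  ultimately have "((\<lambda>u. u ^ 2 * gamma_pdf_deriv k u / u powr k)
      \<longlongrightarrow> k powr k / Gamma k * (k - 1)) (at_right 0)"
    by (auto intro: Lim_transform_eventually)
  then have "((\<lambda>c. gamma_scale_mix m 2 (gamma_pdf_deriv k) c / c powr (k - real 2))
      \<longlongrightarrow> k powr k / Gamma k * (k - 1) * (Gamma (m - k) * m powr k / Gamma m)) (at_right 0)"
    using gamma_pdf_deriv_mult_square_bounds(2)[OF k(1)]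
    by (intro gamma_scale_mix_tendsto[OF k, where C="k powr k / Gamma k * (\<bar>k - 1\<bar> + 1)"]) auto
  then show ?thesis
    using k by (simp add: powr_mult mult_ac)
qed

lemma sop_approx_eq_gamma_scale_mix:
  assumes k: "k > 0" and m: "m > 0" and gd: "gd > 0" and a: "lam - 1 + lam * ge > 0"
  shows "sop_approx lam k m ke me ge gd
    = gamma_scale_mix m 0 (gamma_cdf k) ((lam - 1 + lam * ge) / gd)
      + genK_var ke me ge / 2 * ((lam / gd)\<^sup>2 * gamma_scale_mix m 2 (gamma_pdf_deriv k) ((lam - 1 + lam * ge) / gd))"
proof -
  define \<alpha> \<beta> where "\<alpha> = (lam - 1) / gd" and "\<beta> = lam / gd"
  have affine: "(lam - 1 + lam * x) / gd = \<alpha> + \<beta> * x" for x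
    by (simp add: \<alpha>_def \<beta>_def add_divide_distrib)
  have P: "(\<lambda>x. genK_cdf k m gd (lam - 1 + lam * x)) = (\<lambda>x. gamma_scale_mix m 0 (gamma_cdf k) (\<alpha> + \<beta> * x))"
    by (simp add: genK_cdf_eq_gamma_scale_mix[OF gd] affine)
  have pos: "\<alpha> + \<beta> * ge > 0"
    using a gd by (simp flip: affine)
  have "deriv (deriv (\<lambda>x. gamma_scale_mix m 0 (gamma_cdf k) (\<alpha> + \<beta> * x))) ge
      = \<beta>\<^sup>2 * gamma_scale_mix m 2 (gamma_pdf_deriv k) (\<alpha> + \<beta> * ge)"
    using pos gamma_scale_mix_cdf_has_real_derivative[OF k m] gamma_scale_mix_pdf_has_real_derivative[OF k m pos]
    by (intro deriv_deriv_affine_comp[where S="{0<..}"]) auto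
  then show ?thesis
    unfolding sop_approx_def Let_def P by (simp add: affine \<beta>_def)
qed

lemma sop_approx_mult_powr_eq:
  assumes k: "k > 0" and m: "m > 0" and gd: "gd > 0" and a: "lam - 1 + lam * ge > 0"
  defines "a \<equiv> lam - 1 + lam * ge"
  shows "sop_approx lam k m ke me ge gd * gd powr k
    = gamma_scale_mix m 0 (gamma_cdf k) (a / gd) / (a / gd) powr k * a powr k
      + genK_var ke me ge / 2 * lam\<^sup>2
        * (gamma_scale_mix m 2 (gamma_pdf_deriv k) (a / gd) / (a / gd) powr (k - 2)) * a powr (k - 2)"
proof -
  have "a powr k = (a / gd) powr k * gd powr k" "a powr (k - 2) = (a / gd) powr (k - 2) * gd powr (k - 2)"
    using a gd by (simp_all add: a_def powr_divide)
  moreover have "gd powr (k - 2) = gd powr k / gd\<^sup>2"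
    using gd by (simp add: powr_diff)
  ultimately show ?thesis
    unfolding sop_approx_eq_gamma_scale_mix[OF k m gd a] a_def[symmetric]
    using a gd by (simp add: a_def field_simps)
qed

lemma sop_approx_tendsto:
  assumes k: "0 < k" "k < m" and ke: "ke > 0" and me: "me > 0" and a: "lam - 1 + lam * ge > 0"
  shows "((\<lambda>gd. sop_approx lam k m ke me ge gd * gd powr k)
    \<longlongrightarrow> Gamma (m - k) * (k * m) powr k * (lam - 1 + lam * ge) powr k / (Gamma k * Gamma m)
          * (1 / k + (((ke + 1) * (me + 1) / (ke * me) - 1) * (k - 1) * ge\<^sup>2 * lam\<^sup>2)
              / (2 * (lam - 1 + lam * ge)\<^sup>2))) at_top"
proof -
  have m: "m > 0" using k by simp
  define a X D where "a = lam - 1 + lam * ge" and "X = Gamma (m - k) * (k * m) powr k"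
    and "D = Gamma k * Gamma m"
  have a_pos: "a > 0"
    using a by (simp add: a_def)
  note lim0 = filterlim_compose[OF gamma_scale_mix_cdf_tendsto[OF k] filterlim_divide_at_top_at_right_0[OF a_pos]]
  note lim2 = filterlim_compose[OF gamma_scale_mix_pdf_deriv_tendsto[OF k] filterlim_divide_at_top_at_right_0[OF a_pos]]
  have "((\<lambda>gd. gamma_scale_mix m 0 (gamma_cdf k) (a / gd) / (a / gd) powr k * a powr k
        + genK_var ke me ge / 2 * lam\<^sup>2
          * (gamma_scale_mix m 2 (gamma_pdf_deriv k) (a / gd) / (a / gd) powr (k - 2)) * a powr (k - 2))
      \<longlongrightarrow> X / D / k * a powr k + genK_var ke me ge / 2 * lam\<^sup>2 * (X / D * (k - 1)) * a powr (k - 2)) at_top"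
    unfolding X_def D_def
    by (rule tendsto_add[OF tendsto_mult_right[OF lim0] tendsto_mult_right[OF tendsto_mult_left[OF lim2]]])
  moreover have "eventually (\<lambda>gd. gamma_scale_mix m 0 (gamma_cdf k) (a / gd) / (a / gd) powr k * a powr k
        + genK_var ke me ge / 2 * lam\<^sup>2
          * (gamma_scale_mix m 2 (gamma_pdf_deriv k) (a / gd) / (a / gd) powr (k - 2)) * a powr (k - 2)
      = sop_approx lam k m ke me ge gd * gd powr k) at_top"
    using eventually_gt_at_top[of 0]
    by eventually_elim (simp add: sop_approx_mult_powr_eq[OF k(1) m _ a] a_def)
  ultimately have "((\<lambda>gd. sop_approx lam k m ke me ge gd * gd powr k)
      \<longlongrightarrow> X / D / k * a powr k + genK_var ke me ge / 2 * lam\<^sup>2 * (X / D * (k - 1)) * a powr (k - 2)) at_top"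
    by (rule Lim_transform_eventually)
  moreover have "D > 0"
    using k m by (simp add: D_def Gamma_real_pos)
  moreover have "genK_var ke me ge = ge\<^sup>2 * ((ke + 1) * (me + 1) / (ke * me) - 1)"
    using ke me by (rule genK_var_eq)
  moreover have "a powr (k - 2) = a powr k / a\<^sup>2"
    using a by (simp add: a_def powr_diff)
  ultimately show ?thesis
    using k a_pos unfolding a_def[symmetric] X_def[symmetric] D_def[symmetric] by (simp add: field_simps)
qed

theorem lemma1:
  fixes Rs lam kd md ke me ge v :: real
  assumes "Rs > 0" and "lam = 2 powr Rs"
    and "kd > 0" and "md > 0" and "ke > 0" and "me > 0" and "ge > 0"
    and "kd \<noteq> md" and "v = min kd md"
  shows "(\<lambda>gd. sop_approx lam kd md ke me ge gd
           - gd powr (- v) *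
             (Gamma \<bar>kd - md\<bar> * (kd * md) powr v * (lam - 1 + lam * ge) powr v
               / (Gamma kd * Gamma md))
             * (1 / v + (((ke + 1) * (me + 1) / (ke * me) - 1) * (v - 1) * ge\<^sup>2 * lam\<^sup>2)
                   / (2 * (lam - 1 + lam * ge)\<^sup>2)))
         \<in> o[at_top](\<lambda>gd. gd powr (- v))"
proof -
  define k m where "k = min kd md" and "m = max kd md"
  have k: "0 < k" "k < m" and v: "v = k"
    using assms by (auto simp: k_def m_def)
  have sop: "sop_approx lam kd md ke me ge = sop_approx lam k m ke me ge"
    using assms sop_approx_commute[of kd md] by (auto simp: k_def m_def min_def max_def)
  have swap: "Gamma \<bar>kd - md\<bar> = Gamma (m - k)" "kd * md = k * m" "Gamma kd * Gamma md = Gamma k * Gamma m"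
    by (auto simp: k_def m_def min_def max_def)
  have "lam > 1"
    using assms powr_less_mono[of 0 Rs 2] by simp
  then have "lam - 1 + lam * ge > 0"
    using assms(7) by (simp add: add_pos_pos)
  from smallo_powr_of_tendsto[OF sop_approx_tendsto[OF k assms(5,6) this]] show ?thesis
    unfolding sop v swap by (simp only: mult.assoc)
qed

end
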